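(* Let $\mathbf{d}=(d_1,\dots,d_n)$ be nonnegative reals with $\sum_u d_u>0$, let $(m_k)_{k_{\min}\le k\le k_{\max}}$ be nonnegative integers (with $k_{\min}\ge 2$) satisfying $\sum_k k\,m_k=\sum_{u\in[n]}d_u$, and let $q\in[0,1]$. Let $G$ be the random multi-hypergraph generated by the simplicial Chung–Lu model with inputs $\mathbf{d}$, $(m_k)_k$ and $q$. Then for every $v\in[n]$, $\mathbb{E}[\deg_G(v)]=d_v$.
   Context: Degree in a multi-hypergraph: $\deg_G(v)=\sum_{e\in E(G)}m(v,e)$, where $m(v,e)$ is the multiplicity of $v$ in the (multiset) edge $e$. Let $p(v)=d_v/\sum_{u}d_u$. A Chung–Lu edge of size $k$ is the multiset $\{x_1,\dots,x_k\}$ with $x_1,\dots,x_k$ i.i.d. of law $p$. Simplicial edge of size $k$ given a current list $E$ of edges (with $E_k$ the sublist of edges of size $k$): if $E\setminus E_k$ is empty, return a fresh Chung–Lu edge of size $k$. Otherwise choose $e'$ uniformly at random from the list $E\setminus E_k$; if $|e'|<k$, return the multiset union of $e'$ with a fresh Chung–Lu edge of size $k-|e'|$; if $|e'|>k$, return a uniformly random choice of $k$ of the $|e'|$ entries of $e'$. Simplicial Chung–Lu model: let $S$ be a uniformly random ordering of the multiset of sizes containing $m_k$ copies of $k$ for each $k$. Start with $E$ empty. For each $k$ in $S$ in order, draw an independent $X\sim\mathrm{Bernoulli}(q)$; if $X=1$ generate a simplicial edge of size $k$ given the current $E$, otherwise generate a fresh Chung–Lu edge of size $k$; append it to $E$.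 Output $G=([n],E)$. All random choices are independent except as specified. *)

theory Defs
  imports "HOL-Probability.Probability" "HOL-Combinatorics.Multiset_Permutations"
begin

text \<open>Vertices are the naturals 1..n; an edge is a multiset of vertices.
  The degree vector d is a function nat => real (only the values on 1..n matter).\<close>

type_synonym edge = "nat multiset"

definition vertex_law :: "nat \<Rightarrow> (nat \<Rightarrow> real) \<Rightarrow> nat pmf" where
  "vertex_law n d = embed_pmf (\<lambda>v. if v \<in> {1..n} then d v / (\<Sum>u\<in>{1..n}. d u) else 0)"

fun cl_edge :: "nat pmf \<Rightarrow> nat \<Rightarrow> edge pmf" where
  "cl_edge P 0 = return_pmf {#}"
| "cl_edge P (Suc k) = do { x \<leftarrow> P; e \<leftarrow> cl_edge P k; return_pmf (add_mset x e) }"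

definition sub_choice :: "nat \<Rightarrow> edge \<Rightarrow> edge pmf" where
  "sub_choice k e = (let xs = sorted_list_of_multiset e in
     map_pmf (\<lambda>S. mset (nths xs S)) (pmf_of_set {S. S \<subseteq> {..<length xs} \<and> card S = k}))"

definition simplicial_edge :: "nat pmf \<Rightarrow> nat \<Rightarrow> edge list \<Rightarrow> edge pmf" where
  "simplicial_edge P k E = (let others = filter (\<lambda>e. size e \<noteq> k) E in
     if others = [] then cl_edge P k
     else do {
       i \<leftarrow> pmf_of_set {..<length others};
       let e' = others ! i;
       if size e' < k then map_pmf (\<lambda>f. e' + f) (cl_edge P (k - size e'))
       else sub_choice k e' })"

definition model_step :: "nat pmf \<Rightarrow> real \<Rightarrow> nat \<Rightarrow> edge list \<Rightarrow> edge list pmf" where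
  "model_step P q k E = do {
     X \<leftarrow> bernoulli_pmf q;
     e \<leftarrow> (if X then simplicial_edge P k E else cl_edge P k);
     return_pmf (E @ [e]) }"

fun model_run :: "nat pmf \<Rightarrow> real \<Rightarrow> nat list \<Rightarrow> edge list \<Rightarrow> edge list pmf" where
  "model_run P q [] E = return_pmf E"
| "model_run P q (k # ks) E = model_step P q k E \<bind> model_run P q ks"

definition size_multiset :: "nat \<Rightarrow> nat \<Rightarrow> (nat \<Rightarrow> nat) \<Rightarrow> nat multiset" where
  "size_multiset kmin kmax m = (\<Sum>k\<in>{kmin..kmax}. replicate_mset (m k) k)"

definition simplicial_CL :: "nat \<Rightarrow> (nat \<Rightarrow> real) \<Rightarrow> nat \<Rightarrow> nat \<Rightarrow> (nat \<Rightarrow> nat) \<Rightarrow> real \<Rightarrow> edge list pmf" where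
  "simplicial_CL n d kmin kmax m q = do {
     S \<leftarrow> pmf_of_set (permutations_of_multiset (size_multiset kmin kmax m));
     model_run (vertex_law n d) q S [] }"

definition hdeg :: "edge list \<Rightarrow> nat \<Rightarrow> nat" where
  "hdeg E v = (\<Sum>e\<leftarrow>E. count e v)"

end

theory Submission
  imports Defs
begin

text \<open>Let \<open>p\<close> be the vertex law. We show by induction along the generated edge list that
  every edge of size \<open>s\<close> contains \<open>v\<close> with expected multiplicity \<open>s \<cdot> p(v)\<close>. For a Chung--Lu
  edge this is linearity of expectation. A simplicial edge of size \<open>k\<close> built from an earlier
  edge \<open>e'\<close> of size \<open>s \<noteq> k\<close> has conditional expected multiplicity \<open>count e' v + (k - s) p(v)\<close>
  (extension) or \<open>(k / s) count e' v\<close> (uniform restriction); both are affine in \<open>count e' v\<close>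
  and send \<open>s \<cdot> p(v)\<close> to \<open>k \<cdot> p(v)\<close>. The edge sizes are fixed by the ordering of the sizes,
  so the uniform choice of \<open>e'\<close> does not depend on the random edges and averaging preserves
  the invariant. Summing over all edges gives \<open>(\<Sum>\<^sub>k k m\<^sub>k) p(v) = d\<^sub>v\<close>; neither the value
  of \<open>q\<close> nor the lower bound on the edge sizes matters.\<close>

lemma expectation_bind_pmf_finite:
  fixes h :: "'b \<Rightarrow> real"
  assumes "finite (set_pmf p)" "\<And>x. x \<in> set_pmf p \<Longrightarrow> finite (set_pmf (f x))"
  shows "measure_pmf.expectation (p \<bind> f) h =
    measure_pmf.expectation p (\<lambda>x. measure_pmf.expectation (f x) h)"
  using assms by (subst pmf_expectation_bind[of "set_pmf p"])
    (auto simp: integral_measure_pmf[of "set_pmf p"])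

lemma expectation_pmf_cong:
  fixes f g :: "'a \<Rightarrow> real"
  assumes "\<And>x. x \<in> set_pmf M \<Longrightarrow> f x = g x"
  shows "measure_pmf.expectation M f = measure_pmf.expectation M g"
  by (rule integral_cong_AE) (auto simp: AE_measure_pmf_iff assms)

lemma sum_list_map_conv_sum_nth: "sum_list (map f xs) = (\<Sum>i<length xs. f (xs ! i))"
  by (simp add: sum_list_sum_nth atLeast0LessThan)

section \<open>Chung--Lu edges\<close>

lemma finite_set_pmf_cl_edge: "finite (set_pmf P) \<Longrightarrow> finite (set_pmf (cl_edge P k))"
  by (induction k) auto

lemma size_cl_edge: "e \<in> set_pmf (cl_edge P k) \<Longrightarrow> size e = k"
  by (induction k arbitrary: e) auto

lemma expectation_count_cl_edge:
  assumes "finite (set_pmf P)"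
  shows "measure_pmf.expectation (cl_edge P k) (\<lambda>e. real (count e v)) = real k * pmf P v"
proof (induction k)
  case 0
  then show ?case by simp
next
  case (Suc k)
  have fin: "finite (set_pmf (cl_edge P k))" by (rule finite_set_pmf_cl_edge[OF assms])
  have "measure_pmf.expectation (cl_edge P (Suc k)) (\<lambda>e. real (count e v))
     = measure_pmf.expectation P (\<lambda>x. measure_pmf.expectation (cl_edge P k)
          (\<lambda>e. of_bool (x = v) + real (count e v)))"
    by (simp add: expectation_bind_pmf_finite assms fin) (intro expectation_pmf_cong; simp)
  also have "\<dots> = measure_pmf.expectation P (\<lambda>x. of_bool (x = v) + real k * pmf P v)"
    using fin by (simp add: integrable_measure_pmf_finite Suc)
  also have "\<dots> = measure_pmf.expectation P (\<lambda>x. of_bool (x = v)) + real k * pmf P v"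
    using assms by (simp add: integrable_measure_pmf_finite)
  also have "measure_pmf.expectation P (\<lambda>x. of_bool (x = v)) = pmf P v"
    by (subst integral_measure_pmf[of "{v}"]) auto
  finally show ?case by (simp add: algebra_simps)
qed

section \<open>Uniform sub-multisets\<close>

lemma length_sorted_list_of_multiset [simp]: "length (sorted_list_of_multiset M) = size M"
  by (metis mset_sorted_list_of_multiset size_mset)

lemma count_mset_nths: "count (mset (nths xs S)) v = card {i. i < length xs \<and> i \<in> S \<and> xs!i = v}"
proof (induction xs rule: rev_induct)
  case Nil
  then show ?case by simp
next
  case (snoc x xs)
  have "{i. i < length (xs @ [x]) \<and> i \<in> S \<and> (xs @ [x])!i = v}
      = {i. i < length xs \<and> i \<in> S \<and> xs!i = v} \<union> (if length xs \<in> S \<and> x = v then {length xs} else {})"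
    by (auto simp: nth_append less_Suc_eq)
  then show ?case
    using snoc by (cases "length xs \<in> S \<and> x = v") (auto simp: nths_append)
qed

lemma card_subsets_containing:
  assumes "i < L" "1 \<le> k"
  shows "card {S. S \<subseteq> {..<L} \<and> card S = k \<and> i \<in> S} = (L - 1) choose (k - 1)"
proof -
  let ?T = "{T. T \<subseteq> {..<L} - {i} \<and> card T = k - 1}"
  have "{S. S \<subseteq> {..<L} \<and> card S = k \<and> i \<in> S} = insert i ` ?T"
  proof (intro equalityI subsetI)
    fix S assume S: "S \<in> {S. S \<subseteq> {..<L} \<and> card S = k \<and> i \<in> S}"
    then have "finite S" using finite_subset[of S "{..<L}"] by auto
    then have "S - {i} \<in> ?T" "S = insert i (S - {i})" using S by auto
    then show "S \<in> insert i ` ?T" by blast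
  next
    fix S assume "S \<in> insert i ` ?T"
    then obtain T where T: "T \<in> ?T" "S = insert i T" by blast
    then have "finite T" "i \<notin> T" using finite_subset[of T "{..<L}"] by auto
    then show "S \<in> {S. S \<subseteq> {..<L} \<and> card S = k \<and> i \<in> S}"
      using T assms by auto
  qed
  moreover have "inj_on (insert i) ?T"
    by (rule inj_onI) (metis (no_types, lifting) Diff_insert_absorb mem_Collect_eq subset_Diff_insert)
  ultimately have "card {S. S \<subseteq> {..<L} \<and> card S = k \<and> i \<in> S} = card ?T"
    by (simp add: card_image)
  also have "\<dots> = card ({..<L} - {i}) choose (k - 1)" by (rule n_subsets) simp
  finally show ?thesis using assms by simp
qed

lemma subsets_of_card:
  assumes "k \<le> L"
  defines "F \<equiv> {S. S \<subseteq> {..<L} \<and> card S = k}"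
  shows "finite F" "F \<noteq> {}" "card F = L choose k"
proof -
  show "finite F" unfolding F_def by (rule finite_subset[of _ "Pow {..<L}"]) auto
  show card: "card F = L choose k" unfolding F_def using n_subsets[of "{..<L}" k] by simp
  then show "F \<noteq> {}" using assms(1) by (metis binomial_eq_0_iff card.empty not_le)
qed

lemma expectation_mem_random_subset:
  assumes "i < L" "k \<le> L"
  shows "measure_pmf.expectation (pmf_of_set {S. S \<subseteq> {..<L} \<and> card S = k}) (\<lambda>S. of_bool (i \<in> S))
    = real k / real L"
proof -
  let ?F = "{S. S \<subseteq> {..<L} \<and> card S = k}"
  note F = subsets_of_card[OF assms(2)]
  have "measure_pmf.expectation (pmf_of_set ?F) (\<lambda>S. of_bool (i \<in> S))
      = real (card {S \<in> ?F. i \<in> S}) / real (L choose k)"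
    using F by (simp add: integral_pmf_of_set of_bool_def sum.If_cases Int_def conj_commute)
  also have "\<dots> = real k / real L"
  proof (cases "k = 0")
    case True
    then have "{S \<in> ?F. i \<in> S} = {}" by (auto dest: finite_subset)
    then show ?thesis using True by simp
  next
    case False
    have "{S \<in> ?F. i \<in> S} = {S. S \<subseteq> {..<L} \<and> card S = k \<and> i \<in> S}" by auto
    then have "real (card {S \<in> ?F. i \<in> S}) * real L = real (L choose k) * real k"
      using card_subsets_containing[OF assms(1)] False times_binomial_minus1_eq[of k L]
      by (simp add: mult.commute flip: of_nat_mult)
    moreover have "real (L choose k) > 0" "real L > 0" using assms by auto
    ultimately show ?thesis by (simp add: field_simps)
  qed
  finally show ?thesis .
qed

lemma sub_choice_eq_map_pmf_subsets:
  "sub_choice k e = map_pmf (\<lambda>S. mset (nths (sorted_list_of_multiset e) S))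
     (pmf_of_set {S. S \<subseteq> {..<size e} \<and> card S = k})"
  by (simp add: sub_choice_def)

lemma
  assumes "k \<le> size e"
  shows finite_set_pmf_sub_choice: "finite (set_pmf (sub_choice k e))"
    and size_sub_choice: "f \<in> set_pmf (sub_choice k e) \<Longrightarrow> size f = k"
proof -
  note F = subsets_of_card[OF assms]
  show "finite (set_pmf (sub_choice k e))" using F by (simp add: sub_choice_eq_map_pmf_subsets)
  assume "f \<in> set_pmf (sub_choice k e)"
  then obtain S where S: "S \<subseteq> {..<size e}" "card S = k"
    and f: "f = mset (nths (sorted_list_of_multiset e) S)"
    using F by (auto simp: sub_choice_eq_map_pmf_subsets)
  have "{i. i < size e \<and> i \<in> S} = S" using S by auto
  then show "size f = k"
    using S f by (simp add: length_nths)
qed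

lemma expectation_count_sub_choice:
  assumes "k \<le> size e"
  shows "measure_pmf.expectation (sub_choice k e) (\<lambda>f. real (count f v))
    = real k / real (size e) * real (count e v)"
proof -
  define xs where "xs = sorted_list_of_multiset e"
  define V where "V = {i. i < size e \<and> xs!i = v}"
  have V: "finite V" "V \<subseteq> {..<size e}" by (auto simp: V_def)
  have count_e: "count e v = card V"
    using count_mset_nths[of xs "{..<size e}" v] by (simp add: xs_def V_def)
  have count_nths: "real (count (mset (nths xs S)) v) = (\<Sum>i\<in>V. of_bool (i \<in> S))" for S
  proof -
    have "{i. i < length xs \<and> i \<in> S \<and> xs!i = v} = V \<inter> S" by (auto simp: V_def xs_def)
    then show ?thesis using V(1) by (simp add: count_mset_nths of_bool_def sum.If_cases)
  qed
  have "measure_pmf.expectation (sub_choice k e) (\<lambda>f. real (count f v))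
      = (\<Sum>i\<in>V. measure_pmf.expectation (pmf_of_set {S. S \<subseteq> {..<size e} \<and> card S = k})
            (\<lambda>S. of_bool (i \<in> S)))"
    using subsets_of_card[OF assms]
    by (simp add: sub_choice_eq_map_pmf_subsets xs_def[symmetric] count_nths
        Bochner_Integration.integral_sum integrable_measure_pmf_finite)
  also have "\<dots> = (\<Sum>i\<in>V. real k / real (size e))"
    using V(2) by (intro sum.cong refl expectation_mem_random_subset assms) auto
  finally show ?thesis using count_e by simp
qed

section \<open>Simplicial edges\<close>

definition resize_edge :: "nat pmf \<Rightarrow> nat \<Rightarrow> edge \<Rightarrow> edge pmf" where
  "resize_edge P k e = (if size e < k then map_pmf (\<lambda>f. e + f) (cl_edge P (k - size e))
     else sub_choice k e)"

definition resize_edge_mean :: "nat pmf \<Rightarrow> nat \<Rightarrow> nat \<Rightarrow> edge \<Rightarrow> real" where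
  "resize_edge_mean P v k e = (if size e < k then real (count e v) + real (k - size e) * pmf P v
     else real k / real (size e) * real (count e v))"

lemma finite_set_pmf_resize_edge:
  "finite (set_pmf P) \<Longrightarrow> finite (set_pmf (resize_edge P k e))"
  by (simp add: resize_edge_def finite_set_pmf_cl_edge finite_set_pmf_sub_choice)

lemma size_resize_edge: "f \<in> set_pmf (resize_edge P k e) \<Longrightarrow> size f = k"
  by (cases "size e < k") (auto simp: resize_edge_def not_less size_sub_choice dest: size_cl_edge)

lemma expectation_count_resize_edge:
  assumes "finite (set_pmf P)"
  shows "measure_pmf.expectation (resize_edge P k e) (\<lambda>f. real (count f v)) = resize_edge_mean P v k e"
proof (cases "size e < k")
  case True
  then show ?thesis
    using finite_set_pmf_cl_edge[OF assms] expectation_count_cl_edge[OF assms]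
    by (simp add: resize_edge_def resize_edge_mean_def integrable_measure_pmf_finite)
next
  case False
  then show ?thesis
    by (simp add: resize_edge_def resize_edge_mean_def expectation_count_sub_choice)
qed

lemma simplicial_edge_eq_resize_edge:
  "simplicial_edge P k E = (let others = filter (\<lambda>e. size e \<noteq> k) E in
     if others = [] then cl_edge P k
     else pmf_of_set {..<length others} \<bind> (\<lambda>i. resize_edge P k (others ! i)))"
  by (simp add: simplicial_edge_def resize_edge_def Let_def)

lemma finite_set_pmf_simplicial_edge:
  "finite (set_pmf P) \<Longrightarrow> finite (set_pmf (simplicial_edge P k E))"
  by (auto simp: simplicial_edge_eq_resize_edge Let_def finite_set_pmf_cl_edge
      finite_set_pmf_resize_edge set_pmf_of_set lessThan_empty_iff)

lemma size_simplicial_edge: "f \<in> set_pmf (simplicial_edge P k E) \<Longrightarrow> size f = k"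
  by (auto simp: simplicial_edge_eq_resize_edge Let_def size_resize_edge
      dest: size_cl_edge split: if_splits)

lemma expectation_count_simplicial_edge:
  assumes "finite (set_pmf P)" and others: "filter (\<lambda>e. size e \<noteq> k) E \<noteq> []"
  shows "measure_pmf.expectation (simplicial_edge P k E) (\<lambda>f. real (count f v)) =
    (\<Sum>i<length E. if size (E!i) \<noteq> k then resize_edge_mean P v k (E!i) else 0)
      / real (length (filter (\<lambda>e. size e \<noteq> k) E))"
proof -
  let ?o = "filter (\<lambda>e. size e \<noteq> k) E"
  have "measure_pmf.expectation (simplicial_edge P k E) (\<lambda>f. real (count f v))
      = (\<Sum>i<length ?o. resize_edge_mean P v k (?o ! i) / real (length ?o))"
    using others
    by (simp add: lessThan_empty_iff simplicial_edge_eq_resize_edge Let_def pmf_expectation_bind_pmf_of_set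
        finite_set_pmf_resize_edge expectation_count_resize_edge assms(1) divide_inverse mult.commute)
  also have "\<dots> = sum_list (map (resize_edge_mean P v k) ?o) / real (length ?o)"
    by (simp add: sum_list_map_conv_sum_nth sum_divide_distrib)
  also have "sum_list (map (resize_edge_mean P v k) ?o)
      = (\<Sum>i<length E. if size (E!i) \<noteq> k then resize_edge_mean P v k (E!i) else 0)"
    by (subst sum_list_map_filter') (simp only: sum_list_map_conv_sum_nth length_map nth_map)
  finally show ?thesis .
qed

lemma expectation_resize_edge_mean:
  assumes "finite (set_pmf M)" and size: "\<And>E. E \<in> set_pmf M \<Longrightarrow> size (E!j) = s"
    and mean: "measure_pmf.expectation M (\<lambda>E. real (count (E!j) v)) = real s * pmf P v"
  shows "measure_pmf.expectation M (\<lambda>E. resize_edge_mean P v k (E!j)) = real k * pmf P v"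
proof -
  have "measure_pmf.expectation M (\<lambda>E. resize_edge_mean P v k (E!j))
     = measure_pmf.expectation M (\<lambda>E. if s < k then real (count (E!j) v) + real (k - s) * pmf P v
          else real k / real s * real (count (E!j) v))"
    by (rule expectation_pmf_cong) (simp add: resize_edge_mean_def size)
  also have "\<dots> = real k * pmf P v"
    using assms by (cases "s < k") (simp_all add: integrable_measure_pmf_finite of_nat_diff algebra_simps)
  finally show ?thesis .
qed

lemma set_pmf_model_step:
  "E' \<in> set_pmf (model_step P q k E) \<Longrightarrow> \<exists>e. E' = E @ [e] \<and> size e = k"
  by (auto simp: model_step_def dest: size_simplicial_edge size_cl_edge split: if_splits)

lemma finite_set_pmf_model_step:
  assumes "finite (set_pmf P)"
  shows "finite (set_pmf (model_step P q k E))"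
proof (rule finite_subset)
  show "set_pmf (model_step P q k E)
      \<subseteq> (\<lambda>e. E @ [e]) ` (set_pmf (simplicial_edge P k E) \<union> set_pmf (cl_edge P k))"
    by (auto simp: model_step_def split: if_splits)
qed (use assms finite_set_pmf_simplicial_edge finite_set_pmf_cl_edge in blast)

lemma expectation_model_step_old_edge:
  assumes "i < length E"
  shows "measure_pmf.expectation (model_step P q k E) (\<lambda>E'. real (count (E' ! i) v))
    = real (count (E ! i) v)"
proof -
  have "measure_pmf.expectation (model_step P q k E) (\<lambda>E'. real (count (E' ! i) v))
     = measure_pmf.expectation (model_step P q k E) (\<lambda>_. real (count (E ! i) v))"
    using assms by (intro expectation_pmf_cong) (auto simp: nth_append dest!: set_pmf_model_step)
  then show ?thesis by simp
qed

lemma expectation_model_step_new_edge: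
  assumes "finite (set_pmf P)" "0 \<le> q" "q \<le> 1"
  shows "measure_pmf.expectation (model_step P q k E) (\<lambda>E'. real (count (E' ! length E) v))
    = q * measure_pmf.expectation (simplicial_edge P k E) (\<lambda>f. real (count f v))
      + (1 - q) * (real k * pmf P v)"
proof -
  have fin: "finite (set_pmf (simplicial_edge P k E))" "finite (set_pmf (cl_edge P k))"
    using assms(1) by (simp_all add: finite_set_pmf_simplicial_edge finite_set_pmf_cl_edge)
  have "finite (set_pmf (bernoulli_pmf q))" by (rule finite_subset[of _ UNIV]) auto
  then have "measure_pmf.expectation (model_step P q k E) (\<lambda>E'. real (count (E' ! length E) v))
     = measure_pmf.expectation (bernoulli_pmf q) (\<lambda>X. measure_pmf.expectation
          (if X then simplicial_edge P k E else cl_edge P k) (\<lambda>f. real (count f v)))"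
    using fin by (simp add: model_step_def expectation_bind_pmf_finite)
  then show ?thesis
    using assms expectation_count_cl_edge[OF assms(1)] by (simp add: algebra_simps)
qed

section \<open>The invariant\<close>

definition degree_balanced :: "nat pmf \<Rightarrow> nat \<Rightarrow> edge list pmf \<Rightarrow> nat list \<Rightarrow> bool" where
  "degree_balanced P v M ks \<longleftrightarrow> finite (set_pmf M) \<and> (\<forall>E\<in>set_pmf M. map size E = ks) \<and>
     (\<forall>i<length ks. measure_pmf.expectation M (\<lambda>E. real (count (E!i) v)) = real (ks!i) * pmf P v)"

lemma degree_balancedD:
  assumes "degree_balanced P v M ks"
  shows "finite (set_pmf M)"
    and "E \<in> set_pmf M \<Longrightarrow> length E = length ks"
    and "E \<in> set_pmf M \<Longrightarrow> j < length ks \<Longrightarrow> size (E!j) = ks!j"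
    and "j < length ks \<Longrightarrow>
      measure_pmf.expectation M (\<lambda>E. real (count (E!j) v)) = real (ks!j) * pmf P v"
proof -
  have size: "map size E = ks" if "E \<in> set_pmf M" for E
    using assms that by (simp add: degree_balanced_def)
  show "finite (set_pmf M)"
    and "j < length ks \<Longrightarrow>
      measure_pmf.expectation M (\<lambda>E. real (count (E!j) v)) = real (ks!j) * pmf P v"
    using assms by (simp_all add: degree_balanced_def)
  show "length E = length ks" if "E \<in> set_pmf M"
    using size[OF that] by (metis length_map)
  show "size (E!j) = ks!j" if "E \<in> set_pmf M" "j < length ks"
  proof -
    have "j < length E" using size[OF that(1)] that(2) by auto
    then have "map size E ! j = size (E!j)" by simp
    then show ?thesis using size[OF that(1)] by simp
  qed
qed

lemma expectation_simplicial_edge_balanced: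
  assumes P: "finite (set_pmf P)" and bal: "degree_balanced P v M ks"
  shows "measure_pmf.expectation M
    (\<lambda>E. measure_pmf.expectation (simplicial_edge P k E) (\<lambda>f. real (count f v))) = real k * pmf P v"
proof -
  note fM = degree_balancedD(1)[OF bal] and len = degree_balancedD(2)[OF bal]
    and size = degree_balancedD(3)[OF bal] and mean = degree_balancedD(4)[OF bal]
  define N where "N = length (filter (\<lambda>s. s \<noteq> k) ks)"
  have others: "length (filter (\<lambda>e. size e \<noteq> k) E) = N" if "E \<in> set_pmf M" for E
  proof -
    have "map size E = ks" using bal that by (simp add: degree_balanced_def)
    then show ?thesis unfolding N_def by (auto simp: filter_map o_def)
  qed
  show ?thesis
  proof (cases "N = 0")
    case True
    then have "measure_pmf.expectation M
        (\<lambda>E. measure_pmf.expectation (simplicial_edge P k E) (\<lambda>f. real (count f v)))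
      = measure_pmf.expectation M (\<lambda>_. real k * pmf P v)"
      using others expectation_count_cl_edge[OF P]
      by (intro expectation_pmf_cong) (simp add: simplicial_edge_def)
    then show ?thesis by simp
  next
    case False
    let ?sum = "\<lambda>E. \<Sum>j<length ks. if ks!j \<noteq> k then resize_edge_mean P v k (E!j) else 0"
    have "measure_pmf.expectation M
        (\<lambda>E. measure_pmf.expectation (simplicial_edge P k E) (\<lambda>f. real (count f v)))
      = measure_pmf.expectation M (\<lambda>E. ?sum E / real N)"
    proof (rule expectation_pmf_cong)
      fix E assume E: "E \<in> set_pmf M"
      then have "filter (\<lambda>e. size e \<noteq> k) E \<noteq> []" using others False by fastforce
      then show "measure_pmf.expectation (simplicial_edge P k E) (\<lambda>f. real (count f v)) = ?sum E / real N"
        using others[OF E] len[OF E] size[OF E]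
        by (simp add: expectation_count_simplicial_edge[OF P])
    qed
    also have "\<dots> = (\<Sum>j<length ks. measure_pmf.expectation M
        (\<lambda>E. if ks!j \<noteq> k then resize_edge_mean P v k (E!j) else 0)) / real N"
      using fM by (simp add: integrable_measure_pmf_finite)
    also have "\<dots> = (\<Sum>j<length ks. if ks!j \<noteq> k then real k * pmf P v else 0) / real N"
      using fM size mean
      by (intro arg_cong2[where f = "(/)"] sum.cong refl) (auto intro: expectation_resize_edge_mean)
    also have "\<dots> = real k * pmf P v"
      using False by (simp add: sum.If_cases N_def length_filter_conv_card lessThan_def
          Collect_conj_eq[symmetric])
    finally show ?thesis .
  qed
qed

lemma degree_balanced_bind_model_step:
  assumes P: "finite (set_pmf P)" and q: "0 \<le> q" "q \<le> 1" and bal: "degree_balanced P v M ks"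
  shows "degree_balanced P v (M \<bind> model_step P q k) (ks @ [k])"
proof -
  note fM = degree_balancedD(1)[OF bal] and len = degree_balancedD(2)[OF bal]
  have step_fin: "\<And>E. finite (set_pmf (model_step P q k E))"
    by (rule finite_set_pmf_model_step[OF P])
  have step: "measure_pmf.expectation (M \<bind> model_step P q k) (\<lambda>E'. real (count (E'!i) v))
    = measure_pmf.expectation M (\<lambda>E.
        measure_pmf.expectation (model_step P q k E) (\<lambda>E'. real (count (E'!i) v)))" for i
    using fM step_fin by (rule expectation_bind_pmf_finite)
  have old: "measure_pmf.expectation (M \<bind> model_step P q k) (\<lambda>E'. real (count (E'!i) v))
      = real (ks!i) * pmf P v" if "i < length ks" for i
  proof -
    have "measure_pmf.expectation (M \<bind> model_step P q k) (\<lambda>E'. real (count (E'!i) v))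
        = measure_pmf.expectation M (\<lambda>E. real (count (E!i) v))"
      unfolding step using len that
      by (intro expectation_pmf_cong) (metis expectation_model_step_old_edge)
    then show ?thesis using degree_balancedD(4)[OF bal that] by simp
  qed
  have new: "measure_pmf.expectation (M \<bind> model_step P q k)
      (\<lambda>E'. real (count (E'!length ks) v)) = real k * pmf P v"
  proof -
    have "measure_pmf.expectation (M \<bind> model_step P q k) (\<lambda>E'. real (count (E'!length ks) v))
        = measure_pmf.expectation M (\<lambda>E. q * measure_pmf.expectation (simplicial_edge P k E)
            (\<lambda>f. real (count f v)) + (1 - q) * (real k * pmf P v))"
      unfolding step using len
      by (intro expectation_pmf_cong) (metis expectation_model_step_new_edge[OF P q])
    also have "\<dots> = real k * pmf P v"
      using fM expectation_simplicial_edge_balanced[OF P bal]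
      by (simp add: integrable_measure_pmf_finite algebra_simps)
    finally show ?thesis .
  qed
  have "map size E' = ks @ [k]" if "E' \<in> set_pmf (M \<bind> model_step P q k)" for E'
    using that bal by (auto simp: set_bind_pmf degree_balanced_def dest!: set_pmf_model_step)
  moreover have "finite (set_pmf (M \<bind> model_step P q k))"
    using fM step_fin by (simp add: set_bind_pmf)
  ultimately show ?thesis
    using old new by (auto simp: degree_balanced_def nth_append less_Suc_eq)
qed

lemma degree_balanced_model_run:
  assumes "finite (set_pmf P)" "0 \<le> q" "q \<le> 1"
  shows "degree_balanced P v M ks0 \<Longrightarrow>
    degree_balanced P v (M \<bind> (\<lambda>E. model_run P q ks E)) (ks0 @ ks)"
proof (induction ks arbitrary: M ks0)
  case Nil
  then show ?case by (simp add: bind_return_pmf')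
next
  case (Cons k ks)
  from Cons.IH[OF degree_balanced_bind_model_step[OF assms Cons.prems, of k]]
  show ?case by (simp add: bind_assoc_pmf)
qed

lemma expectation_hdeg_balanced:
  assumes bal: "degree_balanced P v M ks"
  shows "measure_pmf.expectation M (\<lambda>E. real (hdeg E v)) = real (sum_list ks) * pmf P v"
proof -
  have "measure_pmf.expectation M (\<lambda>E. real (hdeg E v))
      = measure_pmf.expectation M (\<lambda>E. \<Sum>i<length ks. real (count (E!i) v))"
    using degree_balancedD(2)[OF bal]
    by (intro expectation_pmf_cong) (simp add: hdeg_def sum_list_map_conv_sum_nth)
  also have "\<dots> = (\<Sum>i<length ks. real (ks!i) * pmf P v)"
    using degree_balancedD(1,4)[OF bal] by (simp add: integrable_measure_pmf_finite)
  also have "\<dots> = real (sum_list ks) * pmf P v"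
    using sum_list_map_conv_sum_nth[of id ks] by (simp add: sum_distrib_right)
  finally show ?thesis .
qed

lemma expectation_hdeg_model_run:
  assumes "finite (set_pmf P)" "0 \<le> q" "q \<le> 1"
  shows "measure_pmf.expectation (model_run P q S []) (\<lambda>E. real (hdeg E v))
    = real (sum_list S) * pmf P v"
    and "finite (set_pmf (model_run P q S []))"
proof -
  have "degree_balanced P v (return_pmf []) []" by (simp add: degree_balanced_def)
  from degree_balanced_model_run[OF assms this]
  have run: "degree_balanced P v (model_run P q S []) S" by (simp add: bind_return_pmf)
  from expectation_hdeg_balanced[OF run] degree_balancedD(1)[OF run]
  show "measure_pmf.expectation (model_run P q S []) (\<lambda>E. real (hdeg E v))
      = real (sum_list S) * pmf P v" and "finite (set_pmf (model_run P q S []))" .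
qed

lemma
  assumes "\<And>u. u \<in> {1..n} \<Longrightarrow> d u \<ge> 0" "(\<Sum>u\<in>{1..n}. d u) > 0"
  shows pmf_vertex_law: "pmf (vertex_law n d) v = (if v \<in> {1..n} then d v / (\<Sum>u\<in>{1..n}. d u) else 0)"
    and finite_set_pmf_vertex_law: "finite (set_pmf (vertex_law n d))"
proof -
  define f where "f = (\<lambda>v. if v \<in> {1..n} then d v / (\<Sum>u\<in>{1..n}. d u) else 0)"
  have nonneg: "\<And>x. 0 \<le> f x" using assms by (simp add: f_def)
  have "(\<integral>\<^sup>+x. ennreal (f x) \<partial>count_space UNIV) = (\<Sum>x\<in>{1..n}. ennreal (f x))"
    by (rule nn_integral_count_space') (auto simp: f_def)
  also have "\<dots> = ennreal (\<Sum>x\<in>{1..n}. f x)"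
    using nonneg by (simp add: sum_ennreal)
  also have "(\<Sum>x\<in>{1..n}. f x) = 1"
    using assms(2) by (simp add: f_def flip: sum_divide_distrib)
  finally have pmf: "\<And>x. pmf (vertex_law n d) x = f x"
    unfolding vertex_law_def f_def[symmetric] using nonneg by (intro pmf_embed_pmf) simp_all
  then show "pmf (vertex_law n d) v = (if v \<in> {1..n} then d v / (\<Sum>u\<in>{1..n}. d u) else 0)"
    by (simp add: f_def)
  have "set_pmf (vertex_law n d) \<subseteq> {1..n}"
    using pmf by (auto simp: set_pmf_iff f_def split: if_splits)
  then show "finite (set_pmf (vertex_law n d))" by (rule finite_subset) simp
qed

lemma sum_mset_sum: "sum_mset (\<Sum>k\<in>K. f k) = (\<Sum>k\<in>K. sum_mset (f k))"
  by (induction K rule: infinite_finite_induct) auto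

lemma sum_list_permutation_of_size_multiset:
  assumes "S \<in> permutations_of_multiset (size_multiset kmin kmax m)"
  shows "sum_list S = (\<Sum>k\<in>{kmin..kmax}. k * m k)"
proof -
  have "sum_list S = sum_mset (size_multiset kmin kmax m)"
    using permutations_of_multisetD[OF assms] by (metis sum_mset_sum_list)
  then show ?thesis by (simp add: size_multiset_def sum_mset_sum mult.commute)
qed

theorem mainTheorem2:
  fixes n :: nat and d :: "nat \<Rightarrow> real" and kmin kmax :: nat and m :: "nat \<Rightarrow> nat" and q :: real
  assumes "\<And>u. u \<in> {1..n} \<Longrightarrow> d u \<ge> 0"
    and "(\<Sum>u\<in>{1..n}. d u) > 0"
    and "kmin \<ge> 2"
    and "(\<Sum>k\<in>{kmin..kmax}. real k * real (m k)) = (\<Sum>u\<in>{1..n}. d u)"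
    and "0 \<le> q" and "q \<le> 1"
    and "v \<in> {1..n}"
  shows "measure_pmf.expectation (simplicial_CL n d kmin kmax m q) (\<lambda>E. real (hdeg E v)) = d v"
proof -
  let ?P = "vertex_law n d" and ?A = "permutations_of_multiset (size_multiset kmin kmax m)"
  have P: "finite (set_pmf ?P)" by (rule finite_set_pmf_vertex_law[OF assms(1,2)])
  note run = expectation_hdeg_model_run[OF P assms(5,6)]
  have hdeg: "measure_pmf.expectation (model_run ?P q S []) (\<lambda>E. real (hdeg E v)) = d v"
    if "S \<in> ?A" for S
    using run(1)[of S v] sum_list_permutation_of_size_multiset[OF that]
      pmf_vertex_law[OF assms(1,2)] assms(2,4,7) by simp
  have "measure_pmf.expectation (simplicial_CL n d kmin kmax m q) (\<lambda>E. real (hdeg E v))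
      = (\<Sum>S\<in>?A. measure_pmf.expectation (model_run ?P q S []) (\<lambda>E. real (hdeg E v)) /\<^sub>R card ?A)"
    unfolding simplicial_CL_def using run(2) by (intro pmf_expectation_bind_pmf_of_set) auto
  also have "\<dots> = (\<Sum>S\<in>?A. d v /\<^sub>R card ?A)"
    using hdeg by (intro sum.cong) simp_all
  also have "\<dots> = d v"
    by (simp add: card_gt_0_iff)
  finally show ?thesis .
qed

end
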